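(* Every branch of a minimal tree is itself a minimal tree (i.e., if $T$ is minimal and $H$ is a branch of $T$ with $|H|=k$, then $I(H)=m_k$).
   Context: A rooted tree $T$ is a finite tree with a distinguished vertex, its root; its order $|T|$ is its number of vertices. For vertices $u,v$, the infimum of $u$ and $v$ is the vertex common to the path from $u$ to the root and the path from $v$ to the root that is furthest from the root. A set $X\subseteq V(T)$ is infima closed if the infimum of any two elements of $X$ lies in $X$. $I(T)$ denotes the number of nonempty infima closed subsets of $V(T)$. For $n\ge1$, $m_n=\min\{I(T): T \text{ a rooted tree with } n \text{ vertices}\}$; a rooted tree $T$ with $I(T)=m_{|T|}$ is called minimal. A branch of $T$ is the subtree consisting of a vertex $v$ together with all its descendants, rooted at $v$. *)

theory Defs
  imports Main "HOL-Library.Sublist"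
begin

text \<open>Rooted trees, represented as rose trees (children in a list; the order of the
children is irrelevant for all notions below). A vertex is addressed by its path
from the root: a list of child indices.\<close>

datatype rtree = Node "rtree list"

inductive is_vert :: "rtree \<Rightarrow> nat list \<Rightarrow> bool" where
  root: "is_vert T []"
| child: "i < length ts \<Longrightarrow> is_vert (ts ! i) p \<Longrightarrow> is_vert (Node ts) (i # p)"

definition verts :: "rtree \<Rightarrow> nat list set" where
  "verts T = {p. is_vert T p}"

definition order :: "rtree \<Rightarrow> nat" where
  "order T = card (verts T)"

text \<open>Infimum of two vertices: the last common vertex of their root paths,
i.e. the longest common prefix of their addresses.\<close>
definition tinf :: "nat list \<Rightarrow> nat list \<Rightarrow> nat list" where
  "tinf u v = longest_common_prefix u v"

definition infima_closed :: "nat list set \<Rightarrow> bool" where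
  "infima_closed X \<longleftrightarrow> (\<forall>u\<in>X. \<forall>v\<in>X. tinf u v \<in> X)"

definition I :: "rtree \<Rightarrow> nat" where
  "I T = card {X. X \<subseteq> verts T \<and> X \<noteq> {} \<and> infima_closed X}"

definition m :: "nat \<Rightarrow> nat" where
  "m n = Inf {I T | T. order T = n}"

definition minimal :: "rtree \<Rightarrow> bool" where
  "minimal T \<longleftrightarrow> I T = m (order T)"

fun branch :: "rtree \<Rightarrow> nat list \<Rightarrow> rtree" where
  "branch T [] = T"
| "branch (Node ts) (i # p) = branch (ts ! i) p"

end

theory Submission
  imports Defs
begin

text \<open>Let \<open>U\<close> be the vertices of \<open>T\<close> outside the branch \<open>H\<close> at \<open>p\<close>. An infima closed set
either lies in \<open>U\<close>, or it meets \<open>H\<close>; in the latter case it splits uniquely into an infima closed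
part of \<open>U\<close> that is also closed under \<open>z \<mapsto> inf z p\<close> (the infimum of \<open>z\<close> with any vertex of \<open>H\<close>)
and a nonempty infima closed subset of \<open>H\<close>. Hence \<open>I T = a + c \<cdot> I H\<close> with \<open>a\<close> and \<open>c \<ge> 1\<close>
depending only on \<open>U\<close> and \<open>p\<close>. Grafting a minimal tree of order \<open>|H|\<close> in place of \<open>H\<close> keeps the
order of \<open>T\<close>, so minimality of \<open>T\<close> forces \<open>I H\<close> to be minimal as well.\<close>

lemma tinf_append_append: "tinf (p @ a) (p @ b) = p @ tinf a b"
  unfolding tinf_def by (induction p) auto

lemma tinf_commute: "tinf a b = tinf b a"
  unfolding tinf_def by (induction a b rule: longest_common_prefix.induct) auto

lemma tinf_append_if_not_prefix: "\<not> prefix p z \<Longrightarrow> tinf z (p @ q) = tinf z p"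
  unfolding tinf_def
proof (induction p arbitrary: z)
  case (Cons a p)
  then show ?case by (cases z) auto
qed simp

lemma not_prefix_tinf: "\<not> prefix p z \<Longrightarrow> \<not> prefix p (tinf z w)"
  unfolding tinf_def using longest_common_prefix_prefix1 prefix_order.trans by blast

lemma is_vert_Cons: "is_vert (Node ts) (i # x) \<longleftrightarrow> i < length ts \<and> is_vert (ts ! i) x"
  by (auto elim: is_vert.cases intro: is_vert.intros)

lemma verts_Node: "verts (Node ts) = insert [] (\<Union>i<length ts. (#) i ` verts (ts ! i))"
  unfolding verts_def
proof (intro set_eqI)
  fix x show "x \<in> {p. is_vert (Node ts) p} \<longleftrightarrow>
      x \<in> insert [] (\<Union>i<length ts. (#) i ` {p. is_vert (ts ! i) p})"
    by (cases x) (auto simp: is_vert_Cons intro: is_vert.root)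
qed

lemma finite_verts: "finite (verts T)"
  by (induction T) (simp add: verts_Node)

lemma is_vert_append: "is_vert T (p @ q) \<longleftrightarrow> is_vert T p \<and> is_vert (branch T p) q"
proof (induction p arbitrary: T)
  case (Cons i p)
  then show ?case by (cases T) (auto simp: is_vert_Cons)
qed (simp add: is_vert.root)

lemma verts_outside_Un_branch:
  assumes "p \<in> verts T"
  shows "verts T = {x \<in> verts T. \<not> prefix p x} \<union> (@) p ` verts (branch T p)"
  using assms unfolding verts_def by (auto simp: is_vert_append prefix_def)

fun graft :: "rtree \<Rightarrow> nat list \<Rightarrow> rtree \<Rightarrow> rtree" where
  "graft T [] S = S"
| "graft (Node ts) (i # p) S = Node (ts[i := graft (ts ! i) p S])"

lemma is_vert_graft:
  "is_vert T p \<Longrightarrow> is_vert (graft T p S) x \<longleftrightarrow>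
     (if prefix p x then is_vert S (drop (length p) x) else is_vert T x)"
proof (induction p arbitrary: T x)
  case (Cons i p)
  obtain ts where T: "T = Node ts" by (cases T)
  have i: "i < length ts" "is_vert (ts ! i) p" using Cons.prems by (auto simp: T is_vert_Cons)
  show ?case
  proof (cases x)
    case (Cons j y)
    then show ?thesis
      using Cons.IH[OF i(2), of y] i by (cases "j = i") (auto simp: T is_vert_Cons)
  qed (simp add: T is_vert.root)
qed simp

lemma verts_graft:
  assumes "p \<in> verts T"
  shows "verts (graft T p S) = {x \<in> verts T. \<not> prefix p x} \<union> (@) p ` verts S"
  using assms unfolding verts_def
  by (auto simp: is_vert_graft prefix_def image_iff split: if_splits)

definition ic_sets :: "nat list set \<Rightarrow> nat list set set" where
  "ic_sets A = {X. X \<subseteq> A \<and> X \<noteq> {} \<and> infima_closed X}"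

text \<open>The (possibly empty) traces on \<open>U\<close> of infima closed sets meeting the branch at \<open>p\<close>.\<close>
definition closed_toward :: "nat list set \<Rightarrow> nat list \<Rightarrow> nat list set set" where
  "closed_toward U p = {Z. Z \<subseteq> U \<and> infima_closed Z \<and> (\<forall>z\<in>Z. tinf z p \<in> Z)}"

lemma I_eq_card_ic_sets: "I T = card (ic_sets (verts T))"
  by (simp add: I_def ic_sets_def)

lemma finite_ic_sets: "finite A \<Longrightarrow> finite (ic_sets A)"
  unfolding ic_sets_def by (rule finite_subset[of _ "Pow A"]) auto

lemma card_closed_toward_pos:
  assumes "finite U"
  shows "0 < card (closed_toward U p)"
proof -
  have "finite (closed_toward U p)"
    unfolding closed_toward_def by (rule finite_subset[of _ "Pow U"]) (auto simp: assms)
  moreover have "{} \<in> closed_toward U p"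
    unfolding closed_toward_def infima_closed_def by auto
  ultimately show ?thesis by (auto simp: card_gt_0_iff)
qed

lemma infima_closed_suffixes: "infima_closed X \<Longrightarrow> infima_closed {q. p @ q \<in> X}"
  unfolding infima_closed_def by (metis mem_Collect_eq tinf_append_append)

lemma trace_in_closed_toward:
  assumes out: "\<forall>x\<in>U. \<not> prefix p x"
    and X: "X \<subseteq> U \<union> (@) p ` S" "infima_closed X" and y: "p @ q \<in> X"
  shows "X \<inter> U \<in> closed_toward U p"
proof -
  have in_U: "x \<in> U" if "x \<in> X" "\<not> prefix p x" for x using that X(1) by auto
  have cl: "tinf a b \<in> X" if "a \<in> X" "b \<in> X" for a b
    using X(2) that unfolding infima_closed_def by auto
  have "tinf a b \<in> X \<inter> U" if "a \<in> X \<inter> U" "b \<in> X \<inter> U" for a b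
    using that cl in_U out not_prefix_tinf by blast
  moreover have "tinf z p \<in> X \<inter> U" if z: "z \<in> X \<inter> U" for z
  proof -
    have "tinf z (p @ q) = tinf z p" using z out tinf_append_if_not_prefix by blast
    then show ?thesis using cl[OF _ y] z in_U out not_prefix_tinf by (metis IntD1 IntD2 IntI)
  qed
  ultimately show ?thesis unfolding closed_toward_def infima_closed_def by blast
qed

lemma infima_closed_glue:
  assumes out: "\<forall>x\<in>U. \<not> prefix p x"
    and Z: "Z \<in> closed_toward U p" and Y: "infima_closed Y"
  shows "infima_closed (Z \<union> (@) p ` Y)"
proof -
  have Zc: "infima_closed Z" and Zp: "\<And>z. z \<in> Z \<Longrightarrow> tinf z p \<in> Z"
    and ZU: "Z \<subseteq> U" using Z unfolding closed_toward_def by auto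
  have mixed: "tinf z (p @ q) \<in> Z" if "z \<in> Z" for z q
    using that ZU out Zp tinf_append_if_not_prefix by (metis subsetD)
  then have mixed': "tinf (p @ q) z \<in> Z" if "z \<in> Z" for z q
    using that tinf_commute by metis
  show ?thesis
    unfolding infima_closed_def
  proof (intro ballI)
    fix a b assume "a \<in> Z \<union> (@) p ` Y" "b \<in> Z \<union> (@) p ` Y"
    then consider "a \<in> Z" "b \<in> Z"
      | q where "a \<in> Z" "b = p @ q"
      | q where "b \<in> Z" "a = p @ q"
      | qa qb where "a = p @ qa" "b = p @ qb" "qa \<in> Y" "qb \<in> Y"
      by blast
    then show "tinf a b \<in> Z \<union> (@) p ` Y"
      using Zc Y mixed mixed' tinf_append_append
      unfolding infima_closed_def by cases auto
  qed
qed

lemma bij_betw_ic_sets_meeting_branch: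
  assumes out: "\<forall>x\<in>U. \<not> prefix p x"
  shows "bij_betw (\<lambda>X. (X \<inter> U, {q. p @ q \<in> X}))
           {X \<in> ic_sets (U \<union> (@) p ` S). \<not> X \<subseteq> U} (closed_toward U p \<times> ic_sets S)"
proof (rule bij_betw_byWitness[where f' = "\<lambda>(Z, Y). Z \<union> (@) p ` Y"])
  have p_notin_U: "p @ q \<notin> U" for q using out by auto
  show "\<forall>X\<in>{X \<in> ic_sets (U \<union> (@) p ` S). \<not> X \<subseteq> U}.
          (case (X \<inter> U, {q. p @ q \<in> X}) of (Z, Y) \<Rightarrow> Z \<union> (@) p ` Y) = X"
    unfolding ic_sets_def by auto
  show "\<forall>ZY\<in>closed_toward U p \<times> ic_sets S.
          (\<lambda>X. (X \<inter> U, {q. p @ q \<in> X})) (case ZY of (Z, Y) \<Rightarrow> Z \<union> (@) p ` Y) = ZY"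
    using p_notin_U unfolding closed_toward_def by auto
  show "(\<lambda>X. (X \<inter> U, {q. p @ q \<in> X})) ` {X \<in> ic_sets (U \<union> (@) p ` S). \<not> X \<subseteq> U}
          \<subseteq> closed_toward U p \<times> ic_sets S"
  proof (rule image_subsetI)
    fix X assume "X \<in> {X \<in> ic_sets (U \<union> (@) p ` S). \<not> X \<subseteq> U}"
    then have X: "X \<subseteq> U \<union> (@) p ` S" "X \<noteq> {}" "infima_closed X" "\<not> X \<subseteq> U"
      unfolding ic_sets_def by auto
    then obtain q where q: "p @ q \<in> X" by auto
    have "X \<inter> U \<in> closed_toward U p"
      using trace_in_closed_toward[OF out X(1,3) q] .
    moreover have "{q. p @ q \<in> X} \<in> ic_sets S"
      using X q infima_closed_suffixes p_notin_U unfolding ic_sets_def by fastforce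
    ultimately show "(X \<inter> U, {q. p @ q \<in> X}) \<in> closed_toward U p \<times> ic_sets S" by simp
  qed
  show "(\<lambda>(Z, Y). Z \<union> (@) p ` Y) ` (closed_toward U p \<times> ic_sets S)
          \<subseteq> {X \<in> ic_sets (U \<union> (@) p ` S). \<not> X \<subseteq> U}"
    using infima_closed_glue[OF out] p_notin_U
    unfolding ic_sets_def closed_toward_def by fastforce
qed

lemma card_ic_sets_Un_branch:
  assumes "finite U" "finite S" "\<forall>x\<in>U. \<not> prefix p x"
  shows "card (ic_sets (U \<union> (@) p ` S))
           = card (ic_sets U) + card (closed_toward U p) * card (ic_sets S)"
proof -
  let ?A = "ic_sets (U \<union> (@) p ` S)"
  have "?A = ic_sets U \<union> {X \<in> ?A. \<not> X \<subseteq> U}" "ic_sets U \<inter> {X \<in> ?A. \<not> X \<subseteq> U} = {}"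
    unfolding ic_sets_def by auto
  moreover have "finite ?A" using assms by (simp add: finite_ic_sets)
  ultimately have "card ?A = card (ic_sets U) + card {X \<in> ?A. \<not> X \<subseteq> U}"
    by (metis card_Un_disjoint finite_Un)
  also have "card {X \<in> ?A. \<not> X \<subseteq> U} = card (closed_toward U p) * card (ic_sets S)"
    using bij_betw_same_card[OF bij_betw_ic_sets_meeting_branch[OF assms(3)]]
    by (simp add: card_cartesian_product)
  finally show ?thesis .
qed

lemma card_Un_append_image:
  assumes "finite U" "finite S" "\<forall>x\<in>U. \<not> prefix p x"
  shows "card (U \<union> (@) p ` S) = card U + card S"
proof -
  have "U \<inter> (@) p ` S = {}" using assms(3) by auto
  moreover have "card ((@) p ` S) = card S" by (simp add: card_image inj_on_def)
  ultimately show ?thesis using assms by (simp add: card_Un_disjoint)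
qed

lemma m_le_I: "order T = n \<Longrightarrow> m n \<le> I T"
  unfolding m_def by (rule cInf_lower) auto

lemma m_attained:
  assumes "order T = n"
  shows "\<exists>T'. order T' = n \<and> I T' = m n"
proof -
  have "m n \<in> {I T | T. order T = n}"
    unfolding m_def by (rule Inf_nat_def1) (use assms in blast)
  then show ?thesis by auto
qed

theorem lemma2p1:
  fixes T H :: rtree and p :: "nat list" and k :: nat
  assumes "minimal T"
    and "p \<in> verts T"
    and "H = branch T p"
    and "order H = k"
  shows "I H = m k"
proof -
  obtain H' where H': "order H' = k" "I H' = m k" using m_attained assms(4) by blast
  define U where "U = {x \<in> verts T. \<not> prefix p x}"
  have U: "finite U" "\<forall>x\<in>U. \<not> prefix p x" unfolding U_def using finite_verts by auto
  have verts_T: "verts T = U \<union> (@) p ` verts H"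
    using verts_outside_Un_branch[OF assms(2)] assms(3) U_def by simp
  have verts_T': "verts (graft T p H') = U \<union> (@) p ` verts H'"
    using verts_graft[OF assms(2)] U_def by simp
  have "order (graft T p H') = order T"
    unfolding order_def verts_T verts_T' card_Un_append_image[OF U(1) finite_verts U(2)]
    using H'(1) assms(4) by (simp add: order_def)
  then have "I T \<le> I (graft T p H')"
    using assms(1) m_le_I unfolding minimal_def by metis
  then have "card (closed_toward U p) * I H \<le> card (closed_toward U p) * I H'"
    unfolding I_eq_card_ic_sets verts_T verts_T'
    by (simp add: card_ic_sets_Un_branch[OF U(1) finite_verts U(2)] flip: I_eq_card_ic_sets)
  then have "I H \<le> m k"
    using card_closed_toward_pos[OF U(1), of p] H'(2) by simp
  then show ?thesis using m_le_I[OF assms(4)] by simp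
qed

end
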